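(* Let $E$ be a finite directed graph and let $A$ be either the path algebra $KE$ or the Leavitt path algebra $L_K(E)$, each with its standard filtration. Then $A$ belongs to exactly one of the following classes: Class 0 ($A$ is finite-dimensional); Class 1 ($A$ is infinite-dimensional with $\mathrm{GKdim}(A)<\infty$); Class 2 ($\mathrm{GKdim}(A)=\infty$ and $\mathrm{h}_{\mathrm{alg}}(A)<\infty$). In particular $\mathrm{h}_{\mathrm{alg}}(A)<\infty$.
   Context: A finite directed graph $E=(E^0,E^1,s,r)$ has finitely many vertices and edges, with source and range maps $s,r:E^1\to E^0$. Paths are finite sequences $e_1\cdots e_n$ of edges with $r(e_i)=s(e_{i+1})$; vertices are paths of length $0$. The path algebra $KE$ over a field $K$ has basis all paths with concatenation product (zero when not composable); its standard filtration $V_n$ is the span of paths of length $\le n$. The Leavitt path algebra $L_K(E)$ is the $K$-algebra generated by $E^0\cup E^1\cup\{e^*:e\in E^1\}$ subject to: $vw=\delta_{v,w}v$ for vertices; $s(e)e=e=er(e)$ and $r(e)e^*=e^*=e^*s(e)$; $e^*f=\delta_{e,f}r(e)$ for $e,f\in E^1$; $\sum_{s(e)=v}ee^*=v$ for every vertex $v$ with $0<|s^{-1}(v)|<\infty$. Its standard filtration $W_n$ is the span of elements $\lambda\mu^*$ with $\lambda,\mu$ paths and $l(\lambda)+l(\mu)\le n$. For a filtration $\{V_n\}$ of an algebra $A$, $\mathrm{h}_{\mathrm{alg}}(A)=0$ if $A$ is finite-dimensional and $\limsup_n\frac1n\log\dim(V_n/V_{n-1})$ otherwise. The Gelfand–Kirillov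 dimension is $\mathrm{GKdim}(A)=\limsup_{n\to\infty}\log\dim(V^n)/\log n$, where $V$ is any finite-dimensional generating subspace and $V^n$ is the span of products of at most $n$ elements of $V$. *)

theory Defs
  imports Complex_Main "HOL-Library.Function_Algebras" "HOL-Library.Extended_Real"
    "HOL-Library.Liminf_Limsup"
begin

definition scalef :: "'k::field \<Rightarrow> ('w \<Rightarrow> 'k) \<Rightarrow> ('w \<Rightarrow> 'k)" where
  "scalef c f = (\<lambda>x. c * f x)"

lemma vector_space_scalef: "vector_space (scalef :: 'k::field \<Rightarrow> ('w \<Rightarrow> 'k) \<Rightarrow> _)"
  by unfold_locales (auto simp: scalef_def fun_eq_iff algebra_simps)

abbreviation fspan :: "('w \<Rightarrow> 'k::field) set \<Rightarrow> ('w \<Rightarrow> 'k) set" where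
  "fspan \<equiv> module.span scalef"

abbreviation fdim :: "('w \<Rightarrow> 'k::field) set \<Rightarrow> nat" where
  "fdim \<equiv> vector_space.dim scalef"

definition bvec :: "'w \<Rightarrow> ('w \<Rightarrow> 'k::field)" where
  "bvec w = (\<lambda>x. if x = w then 1 else 0)"

text \<open>An algebra A is presented as a set of representatives ('carrier') inside a K-vector
  space of functions, a subspace ('ideal') by which it is quotiented (the zero space when no
  quotient is taken), a multiplication on representatives, and a filtration given by finite
  spanning sets: the n-th filtration subspace is the image of fspan (filt n) in A.\<close>

record 'a falg =
  carrier :: "'a set"
  ideal :: "'a set"
  mult :: "'a \<Rightarrow> 'a \<Rightarrow> 'a"
  filt :: "nat \<Rightarrow> 'a set"

definition fin_dim :: "('w \<Rightarrow> 'k::field) falg \<Rightarrow> bool" where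
  "fin_dim A \<longleftrightarrow> (\<exists>B. finite B \<and> B \<subseteq> carrier A \<and> carrier A \<subseteq> fspan (B \<union> ideal A))"

text \<open>Dimension of the image in A of the span of a finite set S:
  dim(span S / (span S \<inter> ideal)).\<close>
definition dimq :: "('w \<Rightarrow> 'k::field) falg \<Rightarrow> ('w \<Rightarrow> 'k) set \<Rightarrow> nat" where
  "dimq A S = fdim (fspan S) - fdim (fspan S \<inter> ideal A)"

definition filt_quot_dim :: "('w \<Rightarrow> 'k::field) falg \<Rightarrow> nat \<Rightarrow> nat" where
  "filt_quot_dim A n = dimq A (filt A n) - (case n of 0 \<Rightarrow> 0 | Suc m \<Rightarrow> dimq A (filt A m))"

definition halg :: "('w \<Rightarrow> 'k::field) falg \<Rightarrow> ereal" where
  "halg A = (if fin_dim A then 0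
     else limsup (\<lambda>n. ereal (ln (real (filt_quot_dim A n)) / real n)))"

fun prodlist :: "('a \<Rightarrow> 'a \<Rightarrow> 'a) \<Rightarrow> 'a list \<Rightarrow> 'a" where
  "prodlist m [] = undefined"
| "prodlist m (x # xs) = foldl m x xs"

definition prods :: "'a falg \<Rightarrow> 'a set \<Rightarrow> nat \<Rightarrow> 'a set" where
  "prods A G n = {prodlist (mult A) xs | xs. set xs \<subseteq> G \<and> 1 \<le> length xs \<and> length xs \<le> n}"

definition generating_set :: "('w \<Rightarrow> 'k::field) falg \<Rightarrow> ('w \<Rightarrow> 'k) set \<Rightarrow> bool" where
  "generating_set A G \<longleftrightarrow> finite G \<and> G \<subseteq> carrier A \<and>
     carrier A \<subseteq> fspan ((\<Union>n. prods A G n) \<union> ideal A)"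

definition gk_growth :: "('w \<Rightarrow> 'k::field) falg \<Rightarrow> ('w \<Rightarrow> 'k) set \<Rightarrow> ereal" where
  "gk_growth A G = limsup (\<lambda>n. ereal (ln (real (dimq A (prods A G n))) / ln (real n)))"

definition GKdim :: "('w \<Rightarrow> 'k::field) falg \<Rightarrow> ereal" where
  "GKdim A = gk_growth A (SOME G. generating_set A G)"

definition class0 :: "('w \<Rightarrow> 'k::field) falg \<Rightarrow> bool" where
  "class0 A \<longleftrightarrow> fin_dim A"
definition class1 :: "('w \<Rightarrow> 'k::field) falg \<Rightarrow> bool" where
  "class1 A \<longleftrightarrow> \<not> fin_dim A \<and> GKdim A < \<infinity>"
definition class2 :: "('w \<Rightarrow> 'k::field) falg \<Rightarrow> bool" where
  "class2 A \<longleftrightarrow> GKdim A = \<infinity> \<and> halg A < \<infinity>"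

definition exactly_one3 :: "bool \<Rightarrow> bool \<Rightarrow> bool \<Rightarrow> bool" where
  "exactly_one3 P Q R \<longleftrightarrow> (P \<and> \<not> Q \<and> \<not> R) \<or> (\<not> P \<and> Q \<and> \<not> R) \<or> (\<not> P \<and> \<not> Q \<and> R)"

text \<open>A path is a pair (v, es): its source vertex v and its edge list es; length 0 paths are
  vertices (v, []).\<close>
definition is_path :: "'v set \<Rightarrow> 'e set \<Rightarrow> ('e \<Rightarrow> 'v) \<Rightarrow> ('e \<Rightarrow> 'v) \<Rightarrow> 'v \<times> 'e list \<Rightarrow> bool" where
  "is_path E0 E1 s r p \<longleftrightarrow> fst p \<in> E0 \<and> set (snd p) \<subseteq> E1 \<and>
     (snd p \<noteq> [] \<longrightarrow> s (hd (snd p)) = fst p) \<and>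
     (\<forall>i. Suc i < length (snd p) \<longrightarrow> r (snd p ! i) = s (snd p ! Suc i))"

definition path_end :: "('e \<Rightarrow> 'v) \<Rightarrow> 'v \<times> 'e list \<Rightarrow> 'v" where
  "path_end r p = (if snd p = [] then fst p else r (last (snd p)))"

definition path_len :: "'v \<times> 'e list \<Rightarrow> nat" where
  "path_len p = length (snd p)"

definition supp :: "('w \<Rightarrow> 'k::zero) \<Rightarrow> 'w set" where
  "supp f = {x. f x \<noteq> 0}"

text \<open>Concatenation p q of paths (None = the product is zero).\<close>
definition path_concat :: "('e \<Rightarrow> 'v) \<Rightarrow> 'v \<times> 'e list \<Rightarrow> 'v \<times> 'e list \<Rightarrow> ('v \<times> 'e list) option" where
  "path_concat r p q = (if path_end r p = fst q then Some (fst p, snd p @ snd q) else None)"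

definition pa_mult :: "('e \<Rightarrow> 'v) \<Rightarrow> ('v \<times> 'e list \<Rightarrow> 'k::field) \<Rightarrow> ('v \<times> 'e list \<Rightarrow> 'k) \<Rightarrow> ('v \<times> 'e list \<Rightarrow> 'k)" where
  "pa_mult r f g = (\<lambda>q. \<Sum>p1\<in>supp f. \<Sum>p2\<in>supp g.
      if path_concat r p1 p2 = Some q then f p1 * g p2 else 0)"

definition path_algebra :: "'v set \<Rightarrow> 'e set \<Rightarrow> ('e \<Rightarrow> 'v) \<Rightarrow> ('e \<Rightarrow> 'v) \<Rightarrow> ('v \<times> 'e list \<Rightarrow> 'k::field) falg" where
  "path_algebra E0 E1 s r =
     \<lparr> carrier = {f. finite (supp f) \<and> supp f \<subseteq> {p. is_path E0 E1 s r p}},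
       ideal = {0},
       mult = pa_mult r,
       filt = (\<lambda>n. {bvec p | p. is_path E0 E1 s r p \<and> path_len p \<le> n}) \<rparr>"

datatype ('v, 'e) gen = GV 'v | GE 'e | GG 'e  \<comment> \<open>vertex v, edge e, ghost edge e*\<close>

definition gens :: "'v set \<Rightarrow> 'e set \<Rightarrow> ('v, 'e) gen set" where
  "gens E0 E1 = GV ` E0 \<union> GE ` E1 \<union> GG ` E1"

text \<open>Product in the free algebra: elements are functions on words (lists of generators),
  supported on nonempty words.\<close>
definition free_mult :: "('g list \<Rightarrow> 'k::field) \<Rightarrow> ('g list \<Rightarrow> 'k) \<Rightarrow> ('g list \<Rightarrow> 'k)" where
  "free_mult f g = (\<lambda>w. \<Sum>i\<in>{1..<length w}. f (take i w) * g (drop i w))"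

definition lpa_relations :: "'v set \<Rightarrow> 'e set \<Rightarrow> ('e \<Rightarrow> 'v) \<Rightarrow> ('e \<Rightarrow> 'v) \<Rightarrow>
    (('v, 'e) gen list \<Rightarrow> 'k::field) set" where
  "lpa_relations E0 E1 s r =
     {bvec [GV v, GV w] - (if v = w then bvec [GV v] else 0) | v w. v \<in> E0 \<and> w \<in> E0}
   \<union> {bvec [GV (s e), GE e] - bvec [GE e] | e. e \<in> E1}
   \<union> {bvec [GE e, GV (r e)] - bvec [GE e] | e. e \<in> E1}
   \<union> {bvec [GV (r e), GG e] - bvec [GG e] | e. e \<in> E1}
   \<union> {bvec [GG e, GV (s e)] - bvec [GG e] | e. e \<in> E1}
   \<union> {bvec [GG e, GE f] - (if e = f then bvec [GV (r e)] else 0) | e f. e \<in> E1 \<and> f \<in> E1}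
   \<union> {(\<Sum>e\<in>{e\<in>E1. s e = v}. bvec [GE e, GG e]) - bvec [GV v] | v.
        v \<in> E0 \<and> {e\<in>E1. s e = v} \<noteq> {} \<and> finite {e\<in>E1. s e = v}}"

definition free_ideal :: "'g set \<Rightarrow> ('g list \<Rightarrow> 'k::field) set \<Rightarrow> ('g list \<Rightarrow> 'k) set" where
  "free_ideal Gs R = fspan (R
     \<union> {free_mult (bvec u) x | u x. x \<in> R \<and> u \<noteq> [] \<and> set u \<subseteq> Gs}
     \<union> {free_mult x (bvec w) | w x. x \<in> R \<and> w \<noteq> [] \<and> set w \<subseteq> Gs}
     \<union> {free_mult (free_mult (bvec u) x) (bvec w) | u w x.
          x \<in> R \<and> u \<noteq> [] \<and> set u \<subseteq> Gs \<and> w \<noteq> [] \<and> set w \<subseteq> Gs})"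

text \<open>A path as an element of L_K(E), and mu* for a path mu (ghost path, reversed).\<close>
definition lpa_path :: "'v \<times> 'e list \<Rightarrow> (('v, 'e) gen list \<Rightarrow> 'k::field)" where
  "lpa_path p = (if snd p = [] then bvec [GV (fst p)] else bvec (map GE (snd p)))"

definition lpa_ghost :: "'v \<times> 'e list \<Rightarrow> (('v, 'e) gen list \<Rightarrow> 'k::field)" where
  "lpa_ghost p = (if snd p = [] then bvec [GV (fst p)] else bvec (rev (map GG (snd p))))"

definition leavitt_path_algebra :: "'v set \<Rightarrow> 'e set \<Rightarrow> ('e \<Rightarrow> 'v) \<Rightarrow> ('e \<Rightarrow> 'v) \<Rightarrow>
    (('v, 'e) gen list \<Rightarrow> 'k::field) falg" where
  "leavitt_path_algebra E0 E1 s r =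
     \<lparr> carrier = {f. finite (supp f) \<and> f [] = 0 \<and> (\<forall>w\<in>supp f. set w \<subseteq> gens E0 E1)},
       ideal = free_ideal (gens E0 E1) (lpa_relations E0 E1 s r),
       mult = free_mult,
       filt = (\<lambda>n. {free_mult (lpa_path lam) (lpa_ghost mu) | lam mu.
                  is_path E0 E1 s r lam \<and> is_path E0 E1 s r mu \<and> path_len lam + path_len mu \<le> n}) \<rparr>"

end

theory Submission
  imports Defs
begin

(* The n-th filtration space of KE is spanned by the paths of length at most n, and that of
   L_K(E) by the products lam mu* of two such paths. There are at most (|E0| + |E1| + 1)^(n+1)
   of them, so dim (V_n / V_(n-1)) grows at most exponentially and h_alg is finite.
   Given that, the three classes are exclusive and exhaustive as soon as a finite-dimensional
   algebra has finite GK dimension, which holds because every power V^n of a generating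
   subspace lies in the algebra, whose dimension bounds dim V^n uniformly. With A presented as
   a quotient, this is the inequality dim W - dim (W \<inter> I) \<le> |B| for W \<subseteq> span (B \<union> I),
   proved by adjoining the vectors of B to I one at a time.
   Neither argument needs s and r to map edges into E0. *)

context vector_space begin

lemma dim_le_dim_Int_insert:
  assumes S: "finite S" and W: "subspace W" "W \<subseteq> span S"
    and I: "subspace I" and WbI: "W \<subseteq> span (insert b I)"
  shows "dim W \<le> dim (W \<inter> I) + 1"
proof -
  obtain C0 where C0: "C0 \<subseteq> W \<inter> I" "independent C0" "W \<inter> I \<subseteq> span C0" "card C0 = dim (W \<inter> I)"
    using basis_exists by blast
  obtain C where C: "C0 \<subseteq> C" "C \<subseteq> W" "independent C" "W \<subseteq> span C"
    using maximal_independent_subset_extend[of C0 W] C0 by blast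
  have finC: "finite C" and dimW: "dim W = card C"
    using independent_span_bound[OF S C(3)] C basis_card_eq_dim[of C W] W by auto
  have not_in_span: "c \<notin> span (C - {c})" if "c \<in> C" for c
    using C(3) that dependent_def by blast
  have coeff: "\<exists>k. c - k *s b \<in> I" if "c \<in> C" for c
    using WbI C(2) that span_eq_iff[THEN iffD2, OF I] unfolding span_insert by auto
  \<comment> \<open>Two vectors of C outside C0 would have a combination free of b, lying in W \<inter> I = span C0.\<close>
  have "\<forall>c\<in>C - C0. \<forall>d\<in>C - C0. c = d"
  proof (intro ballI, rule ccontr)
    fix c d assume c: "c \<in> C - C0" and d: "d \<in> C - C0" and "c \<noteq> d"
    obtain k where k: "c - k *s b \<in> I" using coeff c by blast
    obtain l where l: "d - l *s b \<in> I" using coeff d by blast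
    have C0_sub: "C0 \<subseteq> C - {c}" "C0 \<subseteq> C - {d}" using C(1) c d by auto
    show False
    proof (cases "k = 0")
      case True
      then have "c \<in> W \<inter> I" using k c C(2) by auto
      then have "c \<in> span (C - {c})" using C0(3) span_mono[OF C0_sub(1)] by blast
      then show False using not_in_span c by blast
    next
      case False
      define v where "v = d - (l / k) *s c"
      have "v = (d - l *s b) - (l / k) *s (c - k *s b)"
        using False unfolding v_def by (simp add: algebra_simps)
      then have "v \<in> I" using k l I by (simp add: subspace_diff subspace_scale)
      moreover have "v \<in> W" using c d C(2) W(1) unfolding v_def by (auto intro: subspace_diff subspace_scale)
      ultimately have "v \<in> span (C - {d})" using C0(3) span_mono[OF C0_sub(2)] by blast
      moreover have "(l / k) *s c \<in> span (C - {d})"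
        using c \<open>c \<noteq> d\<close> by (intro span_scale span_base) auto
      ultimately have "d \<in> span (C - {d})" unfolding v_def
        using span_add by fastforce
      then show False using not_in_span d by blast
    qed
  qed
  then have "card (C - C0) \<le> 1" using card_le_Suc0_iff_eq[of "C - C0"] finC by simp
  moreover have "card C = card C0 + card (C - C0)"
    using C(1) finC by (simp add: card_Diff_subset card_mono finite_subset)
  ultimately show ?thesis using dimW C0(4) by linarith
qed

lemma dim_le_dim_Int_add_card:
  assumes "finite B" "finite S" "subspace W" "W \<subseteq> span S" "subspace I" "W \<subseteq> span (B \<union> I)"
  shows "dim W \<le> dim (W \<inter> I) + card B"
  using assms
proof (induction B arbitrary: W I rule: finite_induct)
  case empty
  then have "W \<subseteq> I" using span_eq_iff[THEN iffD2, of I] by simp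
  then show ?case by (simp add: Int_absorb2)
next
  case (insert b B)
  let ?I' = "span (insert b I)"
  have "span (insert b B \<union> I) \<subseteq> span (B \<union> ?I')"
    by (intro span_mono) (auto intro: span_base)
  then have "dim W \<le> dim (W \<inter> ?I') + card B"
    using insert by (intro insert.IH) auto
  moreover have "dim (W \<inter> ?I') \<le> dim (W \<inter> ?I' \<inter> I) + 1"
    using insert by (intro dim_le_dim_Int_insert[of S]) (auto intro: subspace_inter)
  moreover have "W \<inter> ?I' \<inter> I = W \<inter> I" using span_superset by blast
  ultimately show ?case using insert by simp
qed

end

lemma dimq_le_card:
  fixes A :: "('w \<Rightarrow> 'k::field) falg"
  assumes "finite S"
  shows "dimq A S \<le> card S"
proof -
  interpret vector_space "scalef :: 'k \<Rightarrow> ('w \<Rightarrow> 'k) \<Rightarrow> _" by (rule vector_space_scalef)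
  show ?thesis unfolding dimq_def using dim_le_card[OF span_superset assms] by simp
qed

lemma limsup_lt_infinity_if_bounded:
  assumes "\<And>n. f n \<le> c"
  shows "limsup (\<lambda>n. ereal (f n)) < \<infinity>"
proof -
  have "limsup (\<lambda>n. ereal (f n)) \<le> ereal c"
    by (intro Limsup_bounded always_eventually) (simp add: assms)
  then show ?thesis using order.strict_trans1 by fastforce
qed

lemma halg_lt_infinity_if_exponential_bound:
  fixes A :: "('w \<Rightarrow> 'k::field) falg" and D :: nat
  assumes fin: "\<And>n. finite (filt A n)" and card: "\<And>n. card (filt A n) \<le> D ^ Suc n"
  shows "halg A < \<infinity>"
proof -
  have "ln (real (filt_quot_dim A n)) / real n \<le> 2 * ln (real D + 1)" for n
  proof (cases "n = 0 \<or> filt_quot_dim A n = 0")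
    case True
    then show ?thesis by auto
  next
    case False
    have "filt_quot_dim A n \<le> dimq A (filt A n)" unfolding filt_quot_dim_def by simp
    also have "\<dots> \<le> card (filt A n)" by (rule dimq_le_card[OF fin])
    also have "\<dots> \<le> D ^ Suc n" by (rule card)
    finally have "real (filt_quot_dim A n) \<le> real D ^ Suc n"
      by (metis of_nat_le_iff of_nat_power)
    also have "\<dots> \<le> (real D + 1) ^ Suc n" by (intro power_mono) auto
    finally have "ln (real (filt_quot_dim A n)) \<le> ln ((real D + 1) ^ Suc n)"
      using False by (subst ln_le_cancel_iff) auto
    also have "\<dots> = real (Suc n) * ln (real D + 1)" by (rule ln_realpow)
    also have "\<dots> \<le> (2 * real n) * ln (real D + 1)"
      using False by (intro mult_right_mono) auto
    finally show ?thesis using False by (simp add: divide_le_eq mult_ac)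
  qed
  then have "limsup (\<lambda>n. ereal (ln (real (filt_quot_dim A n)) / real n)) < \<infinity>"
    by (rule limsup_lt_infinity_if_bounded)
  then show ?thesis unfolding halg_def by simp
qed

lemma prods_subset_carrier:
  assumes "\<And>x y. x \<in> carrier A \<Longrightarrow> y \<in> carrier A \<Longrightarrow> mult A x y \<in> carrier A"
    and "G \<subseteq> carrier A"
  shows "prods A G n \<subseteq> carrier A"
proof
  fix z assume "z \<in> prods A G n"
  then obtain y ys where "z = foldl (mult A) y ys" "y \<in> G" "set ys \<subseteq> G"
    unfolding prods_def by (auto simp: Suc_le_length_iff)
  moreover have "foldl (mult A) x xs \<in> carrier A"
    if "x \<in> carrier A" "set xs \<subseteq> carrier A" for x xs
    using that by (induction xs arbitrary: x) (auto simp: assms(1))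
  ultimately show "z \<in> carrier A" using assms(2) by blast
qed

lemma finite_prods: "finite G \<Longrightarrow> finite (prods A G n)"
proof -
  assume "finite G"
  have "prods A G n \<subseteq> prodlist (mult A) ` {xs. set xs \<subseteq> G \<and> length xs \<le> n}"
    unfolding prods_def by auto
  then show ?thesis using finite_lists_length_le[OF \<open>finite G\<close>] finite_subset by blast
qed

lemma subset_prods_1: "G \<subseteq> prods A G 1"
  unfolding prods_def by (force intro: exI[of _ "[x]" for x])

lemma GKdim_lt_infinity_if_fin_dim:
  fixes A :: "('w \<Rightarrow> 'k::field) falg"
  assumes "fin_dim A"
    and mult_closed: "\<And>x y. x \<in> carrier A \<Longrightarrow> y \<in> carrier A \<Longrightarrow> mult A x y \<in> carrier A"
    and ideal: "module.subspace scalef (ideal A)"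
  shows "GKdim A < \<infinity>"
proof -
  interpret vector_space "scalef :: 'k \<Rightarrow> ('w \<Rightarrow> 'k) \<Rightarrow> _" by (rule vector_space_scalef)
  obtain B where B: "finite B" "B \<subseteq> carrier A" "carrier A \<subseteq> span (B \<union> ideal A)"
    using \<open>fin_dim A\<close> unfolding fin_dim_def by blast
  have "generating_set A B"
    unfolding generating_set_def
    using B subset_prods_1[of B A] span_mono[of "B \<union> ideal A" "(\<Union>n. prods A B n) \<union> ideal A"]
    by blast
  then have "generating_set A (SOME G. generating_set A G)" by (rule someI)
  then obtain G where G: "G = (SOME G. generating_set A G)" "finite G" "G \<subseteq> carrier A"
    unfolding generating_set_def by blast
  have dimq_bound: "dimq A (prods A G n) \<le> card B" for n
  proof -
    have "prods A G n \<subseteq> span (B \<union> ideal A)"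
      using prods_subset_carrier[OF mult_closed G(3)] B(3) by blast
    then have "span (prods A G n) \<subseteq> span (B \<union> ideal A)"
      using span_minimal[OF _ subspace_span] by blast
    then have "dim (span (prods A G n)) \<le> dim (span (prods A G n) \<inter> ideal A) + card B"
      by (rule dim_le_dim_Int_add_card[OF B(1) finite_prods[OF G(2)] subspace_span order.refl ideal])
    then show ?thesis unfolding dimq_def by linarith
  qed
  have "ln (real (dimq A (prods A G n))) / ln (real n) \<le> ln (real (card B) + 1) / ln 2" for n
  proof (cases "n < 2")
    case True
    then have "n = 0 \<or> n = 1" by auto
    \<comment> \<open>then ln n = 0, and division by 0 gives 0\<close>
    then show ?thesis by auto
  next
    case False
    have "ln (real (dimq A (prods A G n))) \<le> ln (real (card B) + 1)"
      using dimq_bound[of n] by (cases "dimq A (prods A G n) = 0") auto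
    moreover have "ln 2 \<le> ln (real n)" using False by simp
    ultimately show ?thesis
      by (intro frac_le) (auto intro: ln_ge_zero)
  qed
  then show ?thesis
    unfolding GKdim_def gk_growth_def G(1)[symmetric] by (rule limsup_lt_infinity_if_bounded)
qed

lemma exactly_one_class:
  assumes "halg A < \<infinity>" and "fin_dim A \<Longrightarrow> GKdim A < \<infinity>"
  shows "exactly_one3 (class0 A) (class1 A) (class2 A)"
  using assms unfolding exactly_one3_def class0_def class1_def class2_def by auto

definition paths_upto :: "'v set \<Rightarrow> 'e set \<Rightarrow> ('e \<Rightarrow> 'v) \<Rightarrow> ('e \<Rightarrow> 'v) \<Rightarrow> nat \<Rightarrow> ('v \<times> 'e list) set" where
  "paths_upto E0 E1 s r n = {p. is_path E0 E1 s r p \<and> path_len p \<le> n}"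

lemma sum_powers_le_Suc_power: "(\<Sum>i\<le>n. (e::nat) ^ i) \<le> (e + 1) ^ n"
proof (induction n)
  case 0
  then show ?case by simp
next
  case (Suc n)
  have "(\<Sum>i\<le>Suc n. e ^ i) = 1 + (\<Sum>i\<le>n. e * e ^ i)"
    by (subst sum.atMost_Suc_shift) simp
  also have "\<dots> = 1 + e * (\<Sum>i\<le>n. e ^ i)" by (simp add: sum_distrib_left)
  also have "\<dots> \<le> 1 + e * (e + 1) ^ n" using Suc by simp
  also have "\<dots> \<le> (e + 1) ^ Suc n" by simp
  finally show ?case .
qed

lemma paths_upto_subset:
  "paths_upto E0 E1 s r n \<subseteq> E0 \<times> {es. set es \<subseteq> E1 \<and> length es \<le> n}"
  unfolding paths_upto_def is_path_def path_len_def by auto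

lemma finite_paths_upto:
  assumes "finite E0" "finite E1"
  shows "finite (paths_upto E0 E1 s r n)"
  by (rule finite_subset[OF paths_upto_subset]) (simp add: assms finite_lists_length_le)

lemma card_paths_upto_le:
  assumes "finite E0" "finite E1"
  shows "card (paths_upto E0 E1 s r n) \<le> (card E0 + card E1 + 1) ^ Suc n"
proof -
  let ?L = "{es. set es \<subseteq> E1 \<and> length es \<le> n}"
  have "card (paths_upto E0 E1 s r n) \<le> card (E0 \<times> ?L)"
    by (rule card_mono[OF _ paths_upto_subset]) (simp add: assms finite_lists_length_le)
  also have "\<dots> = card E0 * (\<Sum>i\<le>n. card E1 ^ i)"
    using card_lists_length_le[OF assms(2)] by (simp add: card_cartesian_product)
  also have "\<dots> \<le> card E0 * (card E1 + 1) ^ n"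
    using sum_powers_le_Suc_power by simp
  also have "\<dots> \<le> (card E0 + card E1 + 1) * (card E0 + card E1 + 1) ^ n"
    by (intro mult_mono power_mono) auto
  finally show ?thesis by simp
qed

lemma is_path_concat:
  assumes p: "is_path E0 E1 s r p" and q: "is_path E0 E1 s r q" and e: "path_end r p = fst q"
  shows "is_path E0 E1 s r (fst p, snd p @ snd q)"
proof -
  obtain v a where pv: "p = (v, a)" by (cases p)
  obtain w b where qw: "q = (w, b)" by (cases q)
  have P: "v \<in> E0" "set a \<subseteq> E1" "a \<noteq> [] \<Longrightarrow> s (hd a) = v"
     "\<And>i. Suc i < length a \<Longrightarrow> r (a ! i) = s (a ! Suc i)"
    using p unfolding pv is_path_def by auto
  have Q: "w \<in> E0" "set b \<subseteq> E1" "b \<noteq> [] \<Longrightarrow> s (hd b) = w"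
     "\<And>i. Suc i < length b \<Longrightarrow> r (b ! i) = s (b ! Suc i)"
    using q unfolding qw is_path_def by auto
  have E: "(if a = [] then v else r (last a)) = w" using e by (auto simp: pv qw path_end_def split: if_splits)
  have adj: "r ((a @ b) ! i) = s ((a @ b) ! Suc i)" if i: "Suc i < length (a @ b)" for i
  proof -
    consider "Suc i < length a" | "Suc i = length a" | "length a \<le> i" by linarith
    then show ?thesis
    proof cases
      case 1 then show ?thesis using P(4)[of i] by (simp add: nth_append)
    next
      case 2
      then have an: "a \<noteq> []" and bn: "b \<noteq> []" using i by auto
      have ii: "i = length a - 1" using 2 by simp
      have "(a @ b) ! i = last a" using 2 an unfolding ii by (simp add: nth_append last_conv_nth)
      moreover have "(a @ b) ! Suc i = hd b" using 2 bn by (simp add: nth_append hd_conv_nth)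
      ultimately show ?thesis using E an Q(3)[OF bn] by simp
    next
      case 3
      then have "Suc (i - length a) < length b" using i by auto
      then show ?thesis using Q(4)[of "i - length a"] 3 by (simp add: nth_append Suc_diff_le)
    qed
  qed
  have hd: "s (hd (a @ b)) = v" if "a @ b \<noteq> []"
  proof (cases "a = []")
    case True then show ?thesis using that E Q(3) by simp
  next
    case False then show ?thesis using P(3) by simp
  qed
  show ?thesis unfolding pv qw is_path_def using P Q adj hd by auto
qed

lemma supp_pa_mult:
  assumes "q \<in> supp (pa_mult r f g)"
  shows "\<exists>p1\<in>supp f. \<exists>p2\<in>supp g. path_concat r p1 p2 = Some q"
proof (rule ccontr)
  assume "\<not> ?thesis"
  then have "pa_mult r f g q = 0" unfolding pa_mult_def by (intro sum.neutral ballI) auto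
  then show False using assms unfolding supp_def by simp
qed

lemma supp_free_mult:
  assumes "w \<in> supp (free_mult f g)"
  shows "\<exists>i. take i w \<in> supp f \<and> drop i w \<in> supp g"
proof (rule ccontr)
  assume "\<not> ?thesis"
  then have "free_mult f g w = 0" unfolding free_mult_def supp_def by (intro sum.neutral ballI) auto
  then show False using assms unfolding supp_def by simp
qed

lemma path_algebra_mult_closed:
  assumes "f \<in> carrier (path_algebra E0 E1 s r)" "g \<in> carrier (path_algebra E0 E1 s r)"
  shows "mult (path_algebra E0 E1 s r) f g \<in> carrier (path_algebra E0 E1 s r)"
proof -
  let ?Q = "{(p1, p2). p1 \<in> supp f \<and> p2 \<in> supp g \<and> path_end r p1 = fst p2}"
  have f: "finite (supp f)" "supp f \<subseteq> {p. is_path E0 E1 s r p}"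
   and g: "finite (supp g)" "supp g \<subseteq> {p. is_path E0 E1 s r p}"
    using assms unfolding path_algebra_def by auto
  have sub: "supp (pa_mult r f g) \<subseteq> (\<lambda>(p1, p2). (fst p1, snd p1 @ snd p2)) ` ?Q"
  proof
    fix q assume "q \<in> supp (pa_mult r f g)"
    then obtain p1 p2 where "p1 \<in> supp f" "p2 \<in> supp g" "path_concat r p1 p2 = Some q"
      using supp_pa_mult by blast
    then show "q \<in> (\<lambda>(p1, p2). (fst p1, snd p1 @ snd p2)) ` ?Q"
      unfolding path_concat_def by (auto split: if_splits intro!: image_eqI[of _ _ "(p1, p2)"])
  qed
  have "finite ?Q" by (rule finite_subset[of _ "supp f \<times> supp g"]) (use f g in auto)
  then have "finite (supp (pa_mult r f g))" using sub finite_subset by blast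
  moreover have "supp (pa_mult r f g) \<subseteq> {p. is_path E0 E1 s r p}"
    using sub f g is_path_concat by fastforce
  ultimately show ?thesis unfolding path_algebra_def by simp
qed

lemma leavitt_path_algebra_mult_closed:
  assumes "f \<in> carrier (leavitt_path_algebra E0 E1 s r)" "g \<in> carrier (leavitt_path_algebra E0 E1 s r)"
  shows "mult (leavitt_path_algebra E0 E1 s r) f g \<in> carrier (leavitt_path_algebra E0 E1 s r)"
proof -
  have f: "finite (supp f)" "\<forall>w\<in>supp f. set w \<subseteq> gens E0 E1"
   and g: "finite (supp g)" "\<forall>w\<in>supp g. set w \<subseteq> gens E0 E1"
    using assms unfolding leavitt_path_algebra_def by auto
  have sub: "supp (free_mult f g) \<subseteq> (\<lambda>(u, v). u @ v) ` (supp f \<times> supp g)"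
  proof
    fix w assume "w \<in> supp (free_mult f g)"
    then obtain i where "take i w \<in> supp f" "drop i w \<in> supp g" using supp_free_mult by blast
    then show "w \<in> (\<lambda>(u, v). u @ v) ` (supp f \<times> supp g)"
      by (intro image_eqI[of _ _ "(take i w, drop i w)"]) auto
  qed
  then have "finite (supp (free_mult f g))" using f g finite_subset by blast
  moreover have "\<forall>w\<in>supp (free_mult f g). set w \<subseteq> gens E0 E1" using sub f g by fastforce
  moreover have "free_mult f g [] = 0" unfolding free_mult_def by simp
  ultimately show ?thesis unfolding leavitt_path_algebra_def by simp
qed

lemma subspace_ideal_path_algebra:
  "module.subspace scalef (ideal (path_algebra E0 E1 s r :: ('v \<times> 'e list \<Rightarrow> 'k::field) falg))"
proof -
  interpret vector_space "scalef :: 'k \<Rightarrow> ('v \<times> 'e list \<Rightarrow> 'k) \<Rightarrow> _" by (rule vector_space_scalef)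
  show ?thesis by (simp add: path_algebra_def)
qed

lemma subspace_ideal_leavitt_path_algebra:
  "module.subspace scalef (ideal (leavitt_path_algebra E0 E1 s r :: (('v, 'e) gen list \<Rightarrow> 'k::field) falg))"
proof -
  interpret vector_space "scalef :: 'k \<Rightarrow> (('v, 'e) gen list \<Rightarrow> 'k) \<Rightarrow> _" by (rule vector_space_scalef)
  show ?thesis by (simp add: leavitt_path_algebra_def free_ideal_def)
qed

lemma halg_path_algebra_lt_infinity:
  assumes "finite E0" "finite E1"
  shows "halg (path_algebra E0 E1 s r) < \<infinity>"
proof (rule halg_lt_infinity_if_exponential_bound)
  fix n
  let ?P = "paths_upto E0 E1 s r n"
  have P: "finite ?P" "card ?P \<le> (card E0 + card E1 + 1) ^ Suc n"
    using finite_paths_upto[OF assms] card_paths_upto_le[OF assms] by auto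
  have filt: "filt (path_algebra E0 E1 s r) n = bvec ` ?P"
    unfolding path_algebra_def paths_upto_def by auto
  show "finite (filt (path_algebra E0 E1 s r) n)" unfolding filt using P(1) by simp
  show "card (filt (path_algebra E0 E1 s r) n) \<le> (card E0 + card E1 + 1) ^ Suc n"
    unfolding filt by (rule order.trans[OF card_image_le[OF P(1)] P(2)])
qed

lemma halg_leavitt_path_algebra_lt_infinity:
  assumes "finite E0" "finite E1"
  shows "halg (leavitt_path_algebra E0 E1 s r) < \<infinity>"
proof (rule halg_lt_infinity_if_exponential_bound)
  fix n
  let ?P = "paths_upto E0 E1 s r n" and ?C = "card E0 + card E1 + 1"
  let ?F = "filt (leavitt_path_algebra E0 E1 s r) n"
  have P: "finite ?P" "card ?P \<le> ?C ^ Suc n"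
    using finite_paths_upto[OF assms] card_paths_upto_le[OF assms] by auto
  have fin: "finite (?P \<times> ?P)" using P(1) by simp
  have filt: "?F \<subseteq> (\<lambda>(lam, mu). free_mult (lpa_path lam) (lpa_ghost mu)) ` (?P \<times> ?P)"
    unfolding leavitt_path_algebra_def paths_upto_def by auto
  show "finite ?F" using filt fin finite_subset by blast
  have "card ?F \<le> card (?P \<times> ?P)"
    by (rule order.trans[OF card_mono[OF finite_imageI[OF fin] filt] card_image_le[OF fin]])
  also have "\<dots> \<le> ?C ^ Suc n * ?C ^ Suc n"
    using P(2) by (simp add: card_cartesian_product mult_le_mono)
  also have "\<dots> = (?C * ?C) ^ Suc n" by (rule power_mult_distrib[symmetric])
  finally show "card ?F \<le> (?C * ?C) ^ Suc n" .
qed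

theorem theorem5p16:
  fixes E0 :: "'v set" and E1 :: "'e set" and s r :: "'e \<Rightarrow> 'v"
  assumes "finite E0" and "finite E1" and "s ` E1 \<subseteq> E0" and "r ` E1 \<subseteq> E0"
    and "A = (path_algebra E0 E1 s r :: ('v \<times> 'e list \<Rightarrow> 'k::field) falg)"
    and "L = (leavitt_path_algebra E0 E1 s r :: (('v, 'e) gen list \<Rightarrow> 'k) falg)"
  shows "exactly_one3 (class0 A) (class1 A) (class2 A) \<and> halg A < \<infinity>
       \<and> exactly_one3 (class0 L) (class1 L) (class2 L) \<and> halg L < \<infinity>"
proof -
  have halg_A: "halg A < \<infinity>"
    unfolding assms(5) by (rule halg_path_algebra_lt_infinity[OF assms(1,2)])
  have halg_L: "halg L < \<infinity>"
    unfolding assms(6) by (rule halg_leavitt_path_algebra_lt_infinity[OF assms(1,2)])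
  have GKdim_A: "fin_dim A \<Longrightarrow> GKdim A < \<infinity>"
    unfolding assms(5)
    by (rule GKdim_lt_infinity_if_fin_dim[OF _ path_algebra_mult_closed subspace_ideal_path_algebra])
  have GKdim_L: "fin_dim L \<Longrightarrow> GKdim L < \<infinity>"
    unfolding assms(6)
    by (rule GKdim_lt_infinity_if_fin_dim[OF _ leavitt_path_algebra_mult_closed
          subspace_ideal_leavitt_path_algebra])
  show ?thesis
    using halg_A halg_L exactly_one_class[OF halg_A GKdim_A] exactly_one_class[OF halg_L GKdim_L]
    by blast
qed

end
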